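(* Both SW-PAV and IW-PAV can fail SW-JR when an SW-JR committee exists: there exist approval-based SCV instances admitting a committee that satisfies SW-JR, in which a committee maximizing the SW-PAV score does not satisfy SW-JR, and likewise in which a committee maximizing the IW-PAV score does not satisfy SW-JR.
   Context: An approval-based sub-committee voting (SCV) instance consists of a set of voters $N=\{1,\ldots,n\}$, a finite set of candidates $C$ partitioned into candidate subsets $C_1,\ldots,C_\ell$, positive integer quotas $k_j\le |C_j|$ with $k=\sum_{j=1}^\ell k_j$, and approval ballots $A_i\subseteq C$ for $i\in N$. A committee is a set $W\subseteq C$ with $|W\cap C_j|=k_j$ for every $j$. Let $r(0)=0$ and $r(t)=\sum_{p=1}^t 1/p$ for $t\ge1$. The SW-PAV score of $W$ is $\sum_{i\in N} r(|W\cap A_i|)$; the IW-PAV score is $\sum_{j=1}^\ell\sum_{i\in N} r(|W\cap A_i\cap C_j|)$. $W$ satisfies SW-JR if for every $X\subseteq N$ with $|X|\ge n/k$ and $|\bigcap_{i\in X}A_i|\ge 1$ we have $|W\cap \bigcup_{i\in X}A_i|\ge 1$. *)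

theory Defs
  imports Complex_Main
begin

text \<open>An approval-based SCV instance is given by
  n voters (voters are 1..n),
  l candidate subsets Cs 0, ..., Cs (l-1) (a partition of the candidate set C),
  quotas ks 0, ..., ks (l-1), and approval ballots A i for voters i in 1..n.\<close>

definition scv_cands :: "nat \<Rightarrow> (nat \<Rightarrow> nat set) \<Rightarrow> nat set" where
  "scv_cands l Cs = (\<Union>j<l. Cs j)"

definition scv_instance ::
  "nat \<Rightarrow> nat \<Rightarrow> (nat \<Rightarrow> nat set) \<Rightarrow> (nat \<Rightarrow> nat) \<Rightarrow> (nat \<Rightarrow> nat set) \<Rightarrow> bool" where
  "scv_instance n l Cs ks A \<longleftrightarrow>
     n \<ge> 1 \<and> l \<ge> 1 \<and>
     finite (scv_cands l Cs) \<and>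
     (\<forall>j<l. Cs j \<noteq> {}) \<and>
     (\<forall>j<l. \<forall>j'<l. j \<noteq> j' \<longrightarrow> Cs j \<inter> Cs j' = {}) \<and>
     (\<forall>j<l. 0 < ks j \<and> ks j \<le> card (Cs j)) \<and>
     (\<forall>i\<in>{1..n}. A i \<subseteq> scv_cands l Cs)"

definition scv_k :: "nat \<Rightarrow> (nat \<Rightarrow> nat) \<Rightarrow> nat" where
  "scv_k l ks = (\<Sum>j<l. ks j)"

definition committee ::
  "nat \<Rightarrow> (nat \<Rightarrow> nat set) \<Rightarrow> (nat \<Rightarrow> nat) \<Rightarrow> nat set \<Rightarrow> bool" where
  "committee l Cs ks W \<longleftrightarrow> W \<subseteq> scv_cands l Cs \<and> (\<forall>j<l. card (W \<inter> Cs j) = ks j)"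

definition pav_r :: "nat \<Rightarrow> real" where
  "pav_r t = (\<Sum>p=1..t. 1 / real p)"

definition sw_pav :: "nat \<Rightarrow> (nat \<Rightarrow> nat set) \<Rightarrow> nat set \<Rightarrow> real" where
  "sw_pav n A W = (\<Sum>i\<in>{1..n}. pav_r (card (W \<inter> A i)))"

definition iw_pav ::
  "nat \<Rightarrow> nat \<Rightarrow> (nat \<Rightarrow> nat set) \<Rightarrow> (nat \<Rightarrow> nat set) \<Rightarrow> nat set \<Rightarrow> real" where
  "iw_pav n l Cs A W = (\<Sum>j<l. \<Sum>i\<in>{1..n}. pav_r (card (W \<inter> A i \<inter> Cs j)))"

definition sw_jr ::
  "nat \<Rightarrow> nat \<Rightarrow> (nat \<Rightarrow> nat) \<Rightarrow> (nat \<Rightarrow> nat set) \<Rightarrow> nat set \<Rightarrow> bool" where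
  "sw_jr n l ks A W \<longleftrightarrow>
     (\<forall>X \<subseteq> {1..n}. real (card X) \<ge> real n / real (scv_k l ks)
        \<and> card (\<Inter>i\<in>X. A i) \<ge> 1 \<longrightarrow> card (W \<inter> (\<Union>i\<in>X. A i)) \<ge> 1)"

definition sw_pav_max ::
  "nat \<Rightarrow> nat \<Rightarrow> (nat \<Rightarrow> nat set) \<Rightarrow> (nat \<Rightarrow> nat) \<Rightarrow> (nat \<Rightarrow> nat set) \<Rightarrow> nat set \<Rightarrow> bool" where
  "sw_pav_max n l Cs ks A W \<longleftrightarrow> committee l Cs ks W \<and>
     (\<forall>W'. committee l Cs ks W' \<longrightarrow> sw_pav n A W' \<le> sw_pav n A W)"

definition iw_pav_max ::
  "nat \<Rightarrow> nat \<Rightarrow> (nat \<Rightarrow> nat set) \<Rightarrow> (nat \<Rightarrow> nat) \<Rightarrow> (nat \<Rightarrow> nat set) \<Rightarrow> nat set \<Rightarrow> bool" where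
  "iw_pav_max n l Cs ks A W \<longleftrightarrow> committee l Cs ks W \<and>
     (\<forall>W'. committee l Cs ks W' \<longrightarrow> iw_pav n l Cs A W' \<le> iw_pav n l Cs A W)"

end

theory Submission
  imports Defs
begin

text \<open>Take four voters, parts \<open>C\<^sub>0 = {0}\<close>, \<open>C\<^sub>1 = {1,2}\<close>, \<open>C\<^sub>2 = {3,4}\<close> with quotas
  1, 1, 2, let voter 1 approve only candidate 2 and voters 2, 3, 4 approve \<open>{0,1}\<close>.
  Since \<open>n = k\<close>, every single voter is a cohesive group, so SW-JR forces candidate 2 into
  the committee. The only two committees are \<open>{0,1,3,4}\<close> and \<open>{0,2,3,4}\<close>; the first gives
  the majority a second approved member and wins under both PAV scores (9/2 against 4 for
  SW-PAV, 6 against 4 for IW-PAV), yet it leaves voter 1 unrepresented.\<close>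

lemma sw_jr_iff_meets_ballots:
  assumes "n \<le> scv_k l ks" and "finite W" and "\<forall>i\<in>{1..n}. finite (A i)"
  shows "sw_jr n l ks A W \<longleftrightarrow> (\<forall>i\<in>{1..n}. A i \<noteq> {} \<longrightarrow> W \<inter> A i \<noteq> {})"
proof
  assume jr: "sw_jr n l ks A W"
  show "\<forall>i\<in>{1..n}. A i \<noteq> {} \<longrightarrow> W \<inter> A i \<noteq> {}"
  proof (intro ballI impI)
    fix i assume i: "i \<in> {1..n}" and "A i \<noteq> {}"
    then have "card (\<Inter>j\<in>{i}. A j) \<ge> 1"
      using assms(3) by (simp add: Suc_le_eq card_gt_0_iff)
    moreover have "real (card {i}) \<ge> real n / real (scv_k l ks)"
      using assms(1) by (cases "scv_k l ks = 0") simp_all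
    ultimately have "card (W \<inter> (\<Union>j\<in>{i}. A j)) \<ge> 1"
      using jr i unfolding sw_jr_def by blast
    then show "W \<inter> A i \<noteq> {}" by auto
  qed
next
  assume meets: "\<forall>i\<in>{1..n}. A i \<noteq> {} \<longrightarrow> W \<inter> A i \<noteq> {}"
  show "sw_jr n l ks A W"
    unfolding sw_jr_def
  proof (intro allI impI, elim conjE)
    fix X assume X: "X \<subseteq> {1..n}" and common: "card (\<Inter>i\<in>X. A i) \<ge> 1"
    then obtain c where c: "c \<in> (\<Inter>i\<in>X. A i)"
      by (metis card.empty ex_in_conv not_one_le_zero)
    \<comment> \<open>For \<open>X = {}\<close> the intersection is the infinite \<open>UNIV\<close>, whose \<open>card\<close> is 0.\<close>
    from common have "X \<noteq> {}"
      using card.infinite[OF infinite_UNIV_nat] by auto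
    then obtain i where "i \<in> X" by blast
    with X c meets have "W \<inter> (\<Union>i\<in>X. A i) \<noteq> {}" by blast
    with assms(2) show "card (W \<inter> (\<Union>i\<in>X. A i)) \<ge> 1"
      by (simp add: Suc_le_eq card_gt_0_iff)
  qed
qed

lemma pav_r_0 [simp]: "pav_r 0 = 0"
  by (simp add: pav_r_def)

lemma pav_r_Suc [simp]: "pav_r (Suc t) = pav_r t + 1 / Suc t"
  by (simp add: pav_r_def)

lemma card_Int_doubleton_eq_1:
  assumes "a \<noteq> b"
  shows "card (W \<inter> {a, b}) = 1 \<longleftrightarrow> (a \<in> W) \<noteq> (b \<in> W)"
  using assms by (cases "a \<in> W"; cases "b \<in> W") (auto simp: Int_insert_right)

lemma card_Int_doubleton_eq_2:
  assumes "a \<noteq> b"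
  shows "card (W \<inter> {a, b}) = 2 \<longleftrightarrow> a \<in> W \<and> b \<in> W"
  using assms by (cases "a \<in> W"; cases "b \<in> W") (auto simp: Int_insert_right)

lemma lessThan_3_nat: "{..<3::nat} = {0, 1, 2}"
  by auto

lemma all_less_3_nat: "(\<forall>j<3::nat. P j) \<longleftrightarrow> P 0 \<and> P 1 \<and> P 2"
  by (simp add: numeral_3_eq_3 numeral_2_eq_2 All_less_Suc conj_commute conj_left_commute)

lemma atLeastAtMost_1_4_nat: "{1..4::nat} = {1, 2, 3, 4}"
  by auto

definition cex_parts :: "nat \<Rightarrow> nat set" where
  "cex_parts j = (if j = 0 then {0} else if j = 1 then {1, 2} else {3, 4})"

definition cex_quotas :: "nat \<Rightarrow> nat" where
  "cex_quotas j = (if j = 2 then 2 else 1)"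

definition cex_ballots :: "nat \<Rightarrow> nat set" where
  "cex_ballots i = (if i = 1 then {2} else {0, 1})"

lemma cex_cands: "scv_cands 3 cex_parts = {0, 1, 2, 3, 4}"
  by (auto simp: scv_cands_def lessThan_3_nat cex_parts_def)

lemma cex_k: "scv_k 3 cex_quotas = 4"
  by (simp add: scv_k_def lessThan_3_nat cex_quotas_def)

lemma cex_instance: "scv_instance 4 3 cex_parts cex_quotas cex_ballots"
  unfolding scv_instance_def cex_cands
  by (auto simp: all_less_3_nat cex_parts_def cex_quotas_def cex_ballots_def)

lemma cex_committee_iff:
  "committee 3 cex_parts cex_quotas W \<longleftrightarrow> W = {0, 1, 3, 4} \<or> W = {0, 2, 3, 4}"
proof -
  have "committee 3 cex_parts cex_quotas W \<longleftrightarrow>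
      W \<subseteq> {0, 1, 2, 3, 4} \<and> 0 \<in> W \<and> (1 \<in> W) \<noteq> (2 \<in> W) \<and> 3 \<in> W \<and> 4 \<in> W"
    by (simp add: committee_def cex_cands all_less_3_nat cex_parts_def cex_quotas_def
        card_Int_doubleton_eq_1 card_Int_doubleton_eq_2 Int_insert_right)
  also have "\<dots> \<longleftrightarrow> W = {0, 1, 3, 4} \<or> W = {0, 2, 3, 4}"
  proof
    assume h: "W \<subseteq> {0, 1, 2, 3, 4} \<and> 0 \<in> W \<and> (1 \<in> W) \<noteq> (2 \<in> W) \<and> 3 \<in> W \<and> 4 \<in> W"
    show "W = {0, 1, 3, 4} \<or> W = {0, 2, 3, 4}"
    proof (cases "1 \<in> W")
      case True
      with h have "W = {0, 1, 3, 4}" by auto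
      then show ?thesis ..
    next
      case False
      with h have "W = {0, 2, 3, 4}" by auto
      then show ?thesis ..
    qed
  qed auto
  finally show ?thesis .
qed

lemma cex_sw_jr_iff:
  "committee 3 cex_parts cex_quotas W \<Longrightarrow> sw_jr 4 3 cex_quotas cex_ballots W \<longleftrightarrow> 2 \<in> W"
  by (subst sw_jr_iff_meets_ballots)
    (auto simp: cex_k cex_committee_iff cex_ballots_def)

lemma cex_sw_pav:
  "sw_pav 4 cex_ballots {0, 1, 3, 4} = 9 / 2" "sw_pav 4 cex_ballots {0, 2, 3, 4} = 4"
  unfolding sw_pav_def atLeastAtMost_1_4_nat by (simp_all add: cex_ballots_def)

lemma cex_iw_pav:
  "iw_pav 4 3 cex_parts cex_ballots {0, 1, 3, 4} = 6"
  "iw_pav 4 3 cex_parts cex_ballots {0, 2, 3, 4} = 4"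
  unfolding iw_pav_def atLeastAtMost_1_4_nat lessThan_3_nat
  by (simp_all add: cex_parts_def cex_ballots_def)

theorem mainTheorem11:
  shows "(\<exists>n l Cs ks A. scv_instance n l Cs ks A
            \<and> (\<exists>W. committee l Cs ks W \<and> sw_jr n l ks A W)
            \<and> (\<forall>W. sw_pav_max n l Cs ks A W \<longrightarrow> \<not> sw_jr n l ks A W))
       \<and> (\<exists>n l Cs ks A. scv_instance n l Cs ks A
            \<and> (\<exists>W. committee l Cs ks W \<and> sw_jr n l ks A W)
            \<and> (\<forall>W. iw_pav_max n l Cs ks A W \<longrightarrow> \<not> sw_jr n l ks A W))"
proof -
  let ?bad = "{0, 1, 3, 4} :: nat set" and ?good = "{0, 2, 3, 4} :: nat set"
  have good: "committee 3 cex_parts cex_quotas ?good \<and> sw_jr 4 3 cex_quotas cex_ballots ?good"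
    by (simp add: cex_committee_iff cex_sw_jr_iff)
  have bad: "\<not> sw_jr 4 3 cex_quotas cex_ballots ?bad"
    by (simp add: cex_committee_iff cex_sw_jr_iff)
  have "W = ?bad" if "sw_pav_max 4 3 cex_parts cex_quotas cex_ballots W" for W
    using that cex_sw_pav unfolding sw_pav_max_def cex_committee_iff by force
  moreover have "W = ?bad" if "iw_pav_max 4 3 cex_parts cex_quotas cex_ballots W" for W
    using that cex_iw_pav unfolding iw_pav_max_def cex_committee_iff by force
  ultimately show ?thesis
    using cex_instance good bad by blast
qed

end
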